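(* If $(X,(f_n))$ is a complex situation, then $A^f$ is a $\Sigma^0_2$ digraph on $X$ of uncountable Borel chromatic number.
   Context: For a sequence $(f_n)$ of partial functions, $A^f:=\bigcup_n\mathrm{Graph}(f_n)$. A complex situation is a pair $(X,(f_n)_{n\in\omega})$ where $X$ is a nonempty Polish space, each $f_n$ is a partial continuous open map on $X$ whose domain and range are open in $X$, and $\Delta(X)\subseteq\overline{A^f}\setminus A^f$ ($\Delta(X)$ the diagonal). A digraph is a relation disjoint from the diagonal; its Borel chromatic number is the least cardinality of a Polish $Y$ admitting a Borel $c:X\to Y$ with $c(x)\neq c(x')$ for $(x,x')$ in the relation. *)

theory Defs
  imports "HOL-Analysis.Analysis"
begin

definition graph_union :: "(nat \<Rightarrow> ('a \<rightharpoonup> 'a)) \<Rightarrow> ('a \<times> 'a) set" where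
  "graph_union f = (\<Union>n. {(x, y). f n x = Some y})"

definition diagonal :: "('a \<times> 'a) set" where
  "diagonal = {(x, x) | x. True}"

definition is_digraph :: "('a \<times> 'a) set \<Rightarrow> bool" where
  "is_digraph R \<longleftrightarrow> R \<inter> diagonal = {}"

definition partial_cont_open_map :: "('a::topological_space \<rightharpoonup> 'a) \<Rightarrow> bool" where
  "partial_cont_open_map g \<longleftrightarrow>
     open (dom g) \<and> open (ran g) \<and>
     continuous_on (dom g) (\<lambda>x. the (g x)) \<and>
     (\<forall>U. open U \<and> U \<subseteq> dom g \<longrightarrow> open ((\<lambda>x. the (g x)) ` U))"

text \<open>X is the whole (nonempty) Polish type 'a.\<close>
definition complex_situation :: "(nat \<Rightarrow> ('a::polish_space \<rightharpoonup> 'a)) \<Rightarrow> bool" where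
  "complex_situation f \<longleftrightarrow>
     (\<forall>n. partial_cont_open_map (f n)) \<and>
     diagonal \<subseteq> closure (graph_union f) - graph_union f"

definition borel_coloring :: "('a::topological_space \<times> 'a) set \<Rightarrow> ('a \<Rightarrow> 'b::topological_space) \<Rightarrow> bool" where
  "borel_coloring R c \<longleftrightarrow> c \<in> borel_measurable borel \<and> (\<forall>(x, x') \<in> R. c x \<noteq> c x')"

end

theory Submission
  imports Defs
begin

text \<open>A countable Borel coloring partitions X into countably many Borel sets, each with the
  Baire property; by the Baire category theorem one color class B is comeagre in some nonempty
  open set U. Since the diagonal lies in the closure of A^f, some f_n maps a point of U into U,
  and restricting f_n to the open set V of such points gives a continuous open map on V. Open
  continuous maps pull meagre sets back to meagre sets, so a generic y \<in> V satisfies both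
  y \<in> B and f_n y \<in> B: the edge (y, f_n y) is monochromatic. That A^f is F_sigma holds because
  the graph of a continuous map on an open subset of a metric space is F_sigma.\<close>

definition meagre :: "'a::topological_space set \<Rightarrow> bool" where
  "meagre M \<longleftrightarrow> (\<exists>\<G>. countable \<G> \<and> (\<forall>T\<in>\<G>. closed T \<and> interior T = {}) \<and> M \<subseteq> \<Union>\<G>)"

definition has_Baire_property :: "'a::topological_space set \<Rightarrow> bool" where
  "has_Baire_property B \<longleftrightarrow> (\<exists>U. open U \<and> meagre (sym_diff B U))"

lemma meagre_empty [simp]: "meagre {}"
  unfolding meagre_def by blast

lemma meagre_subset: "meagre M \<Longrightarrow> N \<subseteq> M \<Longrightarrow> meagre N"
  unfolding meagre_def by (meson subset_trans)

lemma meagre_closed_nowhere_dense: "closed T \<Longrightarrow> interior T = {} \<Longrightarrow> meagre T"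
  unfolding meagre_def by (intro exI[of _ "{T}"]) auto

lemma meagre_Union:
  assumes "countable \<A>" "\<And>A. A \<in> \<A> \<Longrightarrow> meagre A"
  shows "meagre (\<Union>\<A>)"
proof -
  have "\<forall>A\<in>\<A>. \<exists>\<G>.
      countable \<G> \<and> (\<forall>T\<in>\<G>. closed T \<and> interior T = {}) \<and> A \<subseteq> \<Union>\<G>"
    using assms(2) unfolding meagre_def by blast
  then obtain \<G> where "\<forall>A\<in>\<A>.
      countable (\<G> A) \<and> (\<forall>T\<in>\<G> A. closed T \<and> interior T = {}) \<and> A \<subseteq> \<Union>(\<G> A)"
    by (rule bchoice[THEN exE])
  then have countable: "\<And>A. A \<in> \<A> \<Longrightarrow> countable (\<G> A)"
    and nowhere_dense: "\<And>A T. A \<in> \<A> \<Longrightarrow> T \<in> \<G> A \<Longrightarrow> closed T \<and> interior T = {}"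
    and cover: "\<And>A. A \<in> \<A> \<Longrightarrow> A \<subseteq> \<Union>(\<G> A)"
    by auto
  show ?thesis
    unfolding meagre_def
  proof (intro exI conjI)
    show "countable (\<Union>(\<G> ` \<A>))"
      using countable by (intro countable_UN[OF assms(1)])
    show "\<forall>T\<in>\<Union>(\<G> ` \<A>). closed T \<and> interior T = {}"
      using nowhere_dense by blast
    show "\<Union>\<A> \<subseteq> \<Union>(\<Union>(\<G> ` \<A>))"
      using cover by blast
  qed
qed

lemma meagre_Un: "meagre A \<Longrightarrow> meagre B \<Longrightarrow> meagre (A \<union> B)"
  using meagre_Union[of "{A, B}"] by auto

lemma meagre_closure_diff_open:
  assumes "open U"
  shows "meagre (closure U - U)"
proof (rule meagre_closed_nowhere_dense)
  show "closed (closure U - U)"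
    using assms by (simp add: closed_Diff)
  have "interior (closure U - U) \<inter> U = {}"
    using interior_subset[of "closure U - U"] by blast
  then have "interior (closure U - U) \<inter> closure U = {}"
    by (simp add: open_Int_closure_eq_empty)
  then show "interior (closure U - U) = {}"
    using interior_subset[of "closure U - U"] by blast
qed

lemma has_Baire_property_Compl:
  assumes "has_Baire_property B"
  shows "has_Baire_property (- B)"
proof -
  obtain U where U: "open U" "meagre (sym_diff B U)"
    using assms unfolding has_Baire_property_def by blast
  have "sym_diff (- B) (- closure U) \<subseteq> sym_diff B U \<union> (closure U - U)"
    using closure_subset[of U] by blast
  then have "meagre (sym_diff (- B) (- closure U))"
    by (rule meagre_subset[OF meagre_Un[OF U(2) meagre_closure_diff_open[OF U(1)]]])
  then show ?thesis
    unfolding has_Baire_property_def by (intro exI[of _ "- closure U"]) auto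
qed

lemma has_Baire_property_Union:
  assumes "\<And>i::nat. has_Baire_property (B i)"
  shows "has_Baire_property (\<Union>i. B i)"
proof -
  have "\<forall>i. \<exists>U. open U \<and> meagre (sym_diff (B i) U)"
    using assms by (simp add: has_Baire_property_def)
  then obtain U where U: "\<forall>i. open (U i) \<and> meagre (sym_diff (B i) (U i))"
    by (rule choice[THEN exE])
  have "meagre (\<Union>i. sym_diff (B i) (U i))"
    using U by (intro meagre_Union) auto
  moreover have "sym_diff (\<Union>i. B i) (\<Union>i. U i) \<subseteq> (\<Union>i. sym_diff (B i) (U i))"
    by blast
  ultimately have "meagre (sym_diff (\<Union>i. B i) (\<Union>i. U i))"
    by (rule meagre_subset)
  then show ?thesis
    unfolding has_Baire_property_def using U by (intro exI[of _ "\<Union>i. U i"]) auto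
qed

lemma borel_has_Baire_property:
  assumes "B \<in> sets borel"
  shows "has_Baire_property (B :: 'a::topological_space set)"
proof -
  have "B \<in> sigma_sets UNIV {S. open S}"
    using assms by (simp add: sets_borel)
  then show ?thesis
  proof (induction rule: sigma_sets.induct)
    case (Basic a)
    then show ?case
      unfolding has_Baire_property_def by (intro exI[of _ a]) simp
  next
    case Empty
    then show ?case
      unfolding has_Baire_property_def by (intro exI[of _ "{}"]) simp
  next
    case (Compl a)
    then show ?case
      using has_Baire_property_Compl by (simp add: Compl_eq_Diff_UNIV)
  next
    case (Union A)
    then show ?case
      by (intro has_Baire_property_Union)
  qed
qed

lemma open_not_meagre:
  fixes V :: "'a::polish_space set"
  assumes "open V" "V \<noteq> {}"
  shows "\<not> meagre V"
proof
  assume "meagre V"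
  then obtain \<G> where \<G>: "countable \<G>" "\<And>T. T \<in> \<G> \<Longrightarrow> closed T \<and> interior T = {}"
    "V \<subseteq> \<Union>\<G>"
    unfolding meagre_def by blast
  have "euclidean interior_of \<Union>\<G> = {}"
    using completely_metrizable_space_euclidean \<G>(1,2) by (intro Baire_category_alt) auto
  moreover have "V \<subseteq> interior (\<Union>\<G>)"
    using assms(1) \<G>(3) by (rule interior_maximal[rotated])
  ultimately show False
    using assms(2) by simp
qed

lemma nowhere_dense_vimage_open_map:
  assumes "open V" "continuous_on V g" "\<And>W. open W \<Longrightarrow> W \<subseteq> V \<Longrightarrow> open (g ` W)"
    and "interior T = {}" "closed T"
  shows "interior (closure (V \<inter> g -` T)) = {}"
proof -
  define W where "W = interior (closure (V \<inter> g -` T))"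
  obtain K where K: "closed K" "V \<inter> g -` T = V \<inter> K"
    using continuous_closedin_preimage[OF assms(2,5)] closedin_closed by metis
  \<comment> \<open>a point of V in the closure of the relatively closed set V \<inter> g -` T lies in it\<close>
  have "W \<inter> V \<subseteq> V \<inter> K"
    using closure_minimal[of "V \<inter> g -` T" K] K interior_subset[of "closure (V \<inter> g -` T)"]
    unfolding W_def by blast
  then have "W \<inter> V \<subseteq> g -` T"
    using K(2) by blast
  moreover have "open (W \<inter> V)"
    using assms(1) by (simp add: W_def open_Int)
  ultimately have "g ` (W \<inter> V) \<subseteq> interior T"
    using assms(3) by (intro interior_maximal) auto
  then have "W \<inter> V = {}"
    using assms(4) by blast
  then have "W \<inter> closure V = {}"
    using open_Int_closure_eq_empty[of W V] by (simp add: W_def)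
  moreover have "W \<subseteq> closure V"
    unfolding W_def using interior_subset closure_mono[of "V \<inter> g -` T" V] by blast
  ultimately show ?thesis
    unfolding W_def by blast
qed

lemma meagre_vimage_open_map:
  assumes "open V" "continuous_on V g" "\<And>W. open W \<Longrightarrow> W \<subseteq> V \<Longrightarrow> open (g ` W)"
    and "meagre M"
  shows "meagre (V \<inter> g -` M)"
proof -
  obtain \<G> where \<G>: "countable \<G>" "\<And>T. T \<in> \<G> \<Longrightarrow> closed T \<and> interior T = {}" "M \<subseteq> \<Union>\<G>"
    using assms(4) unfolding meagre_def by blast
  have "V \<inter> g -` M \<subseteq> (\<Union>T\<in>\<G>. V \<inter> g -` T)"
    using \<G>(3) by blast
  also have "\<dots> \<subseteq> (\<Union>T\<in>\<G>. closure (V \<inter> g -` T))"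
    by (intro UN_mono order_refl closure_subset)
  finally have "V \<inter> g -` M \<subseteq> (\<Union>T\<in>\<G>. closure (V \<inter> g -` T))" .
  moreover have "meagre (\<Union>T\<in>\<G>. closure (V \<inter> g -` T))"
    using \<G>(1,2) nowhere_dense_vimage_open_map[OF assms(1-3)]
    by (intro meagre_Union meagre_closed_nowhere_dense) auto
  ultimately show ?thesis
    by (rule meagre_subset[rotated])
qed

lemma countable_borel_coloring_comeagre_class:
  fixes c :: "'a::polish_space \<Rightarrow> 'b::t1_space"
  assumes "countable (UNIV :: 'b set)" "c \<in> borel_measurable borel"
  shows "\<exists>b U. open U \<and> U \<noteq> {} \<and> meagre (U - c -` {b})"
proof -
  have "has_Baire_property (c -` {b})" for b
    using measurable_sets[OF assms(2), of "{b}"] by (simp add: borel_has_Baire_property)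
  then obtain U where U: "\<And>b. open (U b)" "\<And>b. meagre (sym_diff (c -` {b}) (U b))"
    unfolding has_Baire_property_def by metis
  obtain b where "U b \<noteq> {}"
  proof (rule ccontr)
    assume "\<not> thesis"
    then have "U b = {}" for b
      using that by blast
    then have "meagre (\<Union>b. c -` {b})"
      using U(2) assms(1) by (intro meagre_Union) auto
    moreover have "(\<Union>b. c -` {b}) = UNIV"
      by auto
    ultimately show False
      using open_not_meagre[of "UNIV :: 'a set"] by simp
  qed
  moreover have "meagre (U b - c -` {b})"
    by (rule meagre_subset[OF U(2)]) blast
  ultimately show ?thesis
    using U(1) by blast
qed

lemma graph_fsigma_in:
  fixes g :: "'a::metric_space \<Rightarrow> 'b::metric_space"
  assumes "open D" "continuous_on D g"
  shows "fsigma_in euclidean {(x, y). x \<in> D \<and> y = g x}"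
proof -
  define h where "h = (\<lambda>p. dist (g (fst p)) (snd p))"
  have "continuous_on (D \<times> UNIV) h"
    unfolding h_def by (intro continuous_intros continuous_on_compose2[OF assms(2)]) auto
  then have "closedin (top_of_set (D \<times> UNIV)) ((D \<times> UNIV) \<inter> h -` {0})"
    by (rule continuous_closedin_preimage) simp
  moreover have "{(x, y). x \<in> D \<and> y = g x} = (D \<times> UNIV) \<inter> h -` {0}"
    by (auto simp: h_def)
  ultimately obtain K where K: "closed K" "{(x, y). x \<in> D \<and> y = g x} = (D \<times> UNIV) \<inter> K"
    unfolding closedin_closed by auto
  have "fsigma_in euclidean (D \<times> (UNIV :: 'b set))"
    using assms(1) by (intro open_imp_fsigma_in metrizable_space_euclidean) (simp add: open_Times)
  then show ?thesis
    unfolding K(2) by (rule fsigma_in_Int) (simp add: K(1) closed_imp_fsigma_in)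
qed

lemma fsigma_in_euclidean_imp_fsigma: "fsigma_in euclidean S \<Longrightarrow> fsigma S"
  unfolding fsigma_in_ascending by (auto intro: fsigma.intros)

lemma graph_union_eq: "graph_union f = (\<Union>n. {(x, y). x \<in> dom (f n) \<and> y = the (f n x)})"
  unfolding graph_union_def by auto

lemma fsigma_graph_union:
  fixes f :: "nat \<Rightarrow> ('a::metric_space \<rightharpoonup> 'a)"
  assumes "\<And>n. partial_cont_open_map (f n)"
  shows "fsigma (graph_union f)"
  unfolding graph_union_eq using assms
  by (intro fsigma_in_euclidean_imp_fsigma fsigma_in_Union)
     (auto simp: partial_cont_open_map_def intro: graph_fsigma_in)

lemma complex_situation_monochromatic_edge:
  fixes f :: "nat \<Rightarrow> ('a::polish_space \<rightharpoonup> 'a)"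
  assumes "complex_situation f" "open U" "U \<noteq> {}" "meagre (U - B)"
  shows "\<exists>(x, y) \<in> graph_union f. x \<in> B \<and> y \<in> B"
proof -
  obtain x where "x \<in> U"
    using assms(3) by blast
  moreover have "(x, x) \<in> closure (graph_union f)"
    using assms(1) unfolding complex_situation_def diagonal_def by auto
  ultimately have "(U \<times> U) \<inter> closure (graph_union f) \<noteq> {}"
    by blast
  then have "graph_union f \<inter> (U \<times> U) \<noteq> {}"
    using open_Int_closure_eq_empty[of "U \<times> U"] assms(2) by (auto simp: open_Times)
  then obtain n z w where z: "f n z = Some w" "z \<in> U" "w \<in> U"
    unfolding graph_union_def by auto
  define g where "g = (\<lambda>y. the (f n y))"
  define V where "V = U \<inter> (dom (f n) \<inter> g -` U)"
  have D: "open (dom (f n))" "continuous_on (dom (f n)) g"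
    "\<And>W. open W \<Longrightarrow> W \<subseteq> dom (f n) \<Longrightarrow> open (g ` W)"
    using assms(1) unfolding complex_situation_def partial_cont_open_map_def g_def by auto
  have "open V"
    unfolding V_def using assms(2) D(1,2) by (auto intro: continuous_open_preimage)
  moreover have "V \<noteq> {}"
    using z unfolding V_def g_def by auto
  ultimately have "\<not> meagre V"
    by (rule open_not_meagre)
  have "continuous_on V g"
    using D(2) by (rule continuous_on_subset) (auto simp: V_def)
  then have "meagre (V \<inter> g -` (U - B))"
    using \<open>open V\<close> D(3) assms(4) by (intro meagre_vimage_open_map) (auto simp: V_def)
  then have "meagre (V \<inter> ((U - B) \<union> g -` (U - B)))"
    by (rule meagre_subset[OF meagre_Un[OF assms(4)]]) blast
  with \<open>\<not> meagre V\<close> obtain y where "y \<in> V" "y \<notin> (U - B) \<union> g -` (U - B)"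
    by (metis inf.absorb1 subsetI)
  then have "y \<in> B" "g y \<in> B" "(y, g y) \<in> graph_union f"
    unfolding V_def g_def graph_union_def by auto
  then show ?thesis
    by blast
qed

theorem corollary2p2:
  fixes f :: "nat \<Rightarrow> ('a::polish_space \<rightharpoonup> 'a)"
  assumes "complex_situation f"
  shows "fsigma (graph_union f) \<and> is_digraph (graph_union f) \<and>
         (\<forall>c :: 'a \<Rightarrow> 'b::polish_space. countable (UNIV :: 'b set) \<longrightarrow>
              \<not> borel_coloring (graph_union f) c)"
proof (intro conjI allI impI notI)
  show "fsigma (graph_union f)"
    using assms by (intro fsigma_graph_union) (simp add: complex_situation_def)
  show "is_digraph (graph_union f)"
    using assms unfolding complex_situation_def is_digraph_def by blast
  fix c :: "'a \<Rightarrow> 'b"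
  assume "countable (UNIV :: 'b set)" and coloring: "borel_coloring (graph_union f) c"
  moreover have "c \<in> borel_measurable borel"
    using coloring by (simp add: borel_coloring_def)
  ultimately obtain b U where "open U" "U \<noteq> {}" "meagre (U - c -` {b})"
    using countable_borel_coloring_comeagre_class by blast
  then obtain x y where "(x, y) \<in> graph_union f" "c x = b" "c y = b"
    using complex_situation_monochromatic_edge[OF assms \<open>open U\<close> \<open>U \<noteq> {}\<close> \<open>meagre (U - c -` {b})\<close>]
    by auto
  then show False
    using coloring unfolding borel_coloring_def by auto
qed

end
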